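(* For parameters $0<\varepsilon<a_1<1$ (with $\varepsilon<1/4$), let $F=F_{a_1,\varepsilon}\subset[0,1]^2$ be the attractor of the three maps $f_i(x)=A_ix+t_i$ with \[ A_1=A_3=\mathrm{diag}(a_1-\varepsilon,\tfrac14-\varepsilon),\ t_1=(1-a_1+\varepsilon,0),\ t_3=(1-a_1+\varepsilon,\tfrac34+\varepsilon),\qquad A_2=\mathrm{diag}(1-a_1,\tfrac12),\ t_2=(0,\tfrac14), \] so that $f_1([0,1]^2)=[1-a_1+\varepsilon,1]\times[0,\tfrac14-\varepsilon]$, $f_2([0,1]^2)=[0,1-a_1]\times[\tfrac14,\tfrac34]$, $f_3([0,1]^2)=[1-a_1+\varepsilon,1]\times[\tfrac34+\varepsilon,1]$. Then for every sufficiently small $\varepsilon>0$ there exists a nonempty open interval $J_\varepsilon$ of values of $a_1$ such that for every $a_1\in J_\varepsilon$, $\dim_{\mathrm A}F=\dim_{\mathrm A}\nu_{\mathbf q^{\sigma}}$ for $\sigma=(1,2)$.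
   Context: $\Sigma=\{1,2,3\}^{\mathbb N}$, $\pi(\mathbf i)=\lim_kf_{i_1}\circ\cdots\circ f_{i_k}(0)$, and for a probability vector $\mathbf p$ with positive entries $\nu_{\mathbf p}=\mathbf p^{\mathbb N}\circ\pi^{-1}$. $\dim_{\mathrm A}F$ is the Assouad dimension of the set $F$; for a measure $\nu$, $\dim_{\mathrm A}\nu$ is the infimum of $s\ge0$ for which some $C>0$ gives $\nu(B(x,R))/\nu(B(x,r))\le C(R/r)^s$ for all $x\in\mathrm{supp}\,\nu$, $0<r<R<|\mathrm{supp}\,\nu|$. Write $\lambda_i^{(1)},\lambda_i^{(2)}$ for the diagonal entries of $A_i$. The measure $\mathbf q^{(1,2)}$: let $\mathcal I_1$ be the set of $j\in\{1,2,3\}$ such that no $i<j$ has $f_i,f_j$ overlapping exactly on the first coordinate axis (equal first coordinates of $f_i(y),f_j(y)$ for all $y\in[0,1]^2$), and for $j$ let $\Pi_1 j$ be the unique element of $\mathcal I_1$ overlapping exactly with $j$ on the first axis. Let $s_0$ solve $\sum_{i\in\mathcal I_1}(\lambda_i^{(1)})^{s_0}=1$ and for $i\in\mathcal I_1$ let $s_1(i)$ solve $\sum_{j:\Pi_1j=i}(\lambda_j^{(2)})^{s_1(i)}=1$; then $q^{(1,2)}(j)=(\lambda^{(1)}_{\Pi_1j})^{s_0}(\lambda^{(2)}_j)^{s_1(\Pi_1j)}$. *)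

theory Defs
  imports "HOL-Probability.Probability"
begin

definition imap :: "(nat \<Rightarrow> real) \<Rightarrow> (nat \<Rightarrow> real) \<Rightarrow> (nat \<Rightarrow> real) \<Rightarrow> (nat \<Rightarrow> real)
    \<Rightarrow> nat \<Rightarrow> real \<times> real \<Rightarrow> real \<times> real" where
  "imap lam1 lam2 t1 t2 i p = (lam1 i * fst p + t1 i, lam2 i * snd p + t2 i)"

definition idx :: "nat set" where "idx = {1,2,3}"

primrec comp_prefix :: "(nat \<Rightarrow> 'a \<Rightarrow> 'a) \<Rightarrow> (nat \<Rightarrow> nat) \<Rightarrow> nat \<Rightarrow> 'a \<Rightarrow> 'a" where
  "comp_prefix f w 0 = id"
| "comp_prefix f w (Suc k) = comp_prefix f w k \<circ> f (w k)"

definition coding :: "(nat \<Rightarrow> real \<times> real \<Rightarrow> real \<times> real) \<Rightarrow> (nat \<Rightarrow> nat) \<Rightarrow> real \<times> real" where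
  "coding f w = lim (\<lambda>k. comp_prefix f w k (0, 0))"

text \<open>Bernoulli measure nu_p = p^N o pi^{-1}; p is a probability vector on {1,2,3}
  (extended by 0 outside).\<close>
definition bernoulli_proj :: "(nat \<Rightarrow> real \<times> real \<Rightarrow> real \<times> real) \<Rightarrow> (nat \<Rightarrow> real)
    \<Rightarrow> (real \<times> real) measure" where
  "bernoulli_proj f p =
     distr (Pi\<^sub>M UNIV (\<lambda>_::nat. measure_pmf (embed_pmf p))) borel (coding f)"

definition unit_sq :: "(real \<times> real) set" where "unit_sq = {0..1} \<times> {0..1}"

definition overlap1 :: "(nat \<Rightarrow> real \<times> real \<Rightarrow> real \<times> real) \<Rightarrow> nat \<Rightarrow> nat \<Rightarrow> bool" where
  "overlap1 f i j \<longleftrightarrow> (\<forall>y\<in>unit_sq. fst (f i y) = fst (f j y))"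

definition I1 :: "(nat \<Rightarrow> real \<times> real \<Rightarrow> real \<times> real) \<Rightarrow> nat set" where
  "I1 f = {j \<in> idx. \<not> (\<exists>i\<in>idx. i < j \<and> overlap1 f i j)}"

definition Pi1 :: "(nat \<Rightarrow> real \<times> real \<Rightarrow> real \<times> real) \<Rightarrow> nat \<Rightarrow> nat" where
  "Pi1 f j = (THE i. i \<in> I1 f \<and> overlap1 f i j)"

definition q12 :: "(nat \<Rightarrow> real) \<Rightarrow> (nat \<Rightarrow> real) \<Rightarrow> (nat \<Rightarrow> real) \<Rightarrow> (nat \<Rightarrow> real)
    \<Rightarrow> nat \<Rightarrow> real" where
  "q12 lam1 lam2 t1 t2 j =
    (let f = imap lam1 lam2 t1 t2;
         s0 = (THE s. (\<Sum>i\<in>I1 f. lam1 i powr s) = 1);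
         s1 = (\<lambda>i. THE s. (\<Sum>j'\<in>{j'\<in>idx. Pi1 f j' = i}. lam2 j' powr s) = 1)
     in if j \<in> idx then lam1 (Pi1 f j) powr s0 * lam2 j powr s1 (Pi1 f j) else 0)"

definition cover_num :: "'a::metric_space set \<Rightarrow> real \<Rightarrow> nat" where
  "cover_num E r = (LEAST n. \<exists>C. finite C \<and> card C = n \<and> E \<subseteq> (\<Union>c\<in>C. cball c r))"

definition assouad_dim_set :: "'a::metric_space set \<Rightarrow> ereal" where
  "assouad_dim_set F = Inf (ereal ` {s. s \<ge> 0 \<and> (\<exists>C>0. \<forall>x\<in>F. \<forall>r R. 0 < r \<and> r < R \<longrightarrow>
       real (cover_num (ball x R \<inter> F) r) \<le> C * (R / r) powr s)})"

definition msupp :: "'a::metric_space measure \<Rightarrow> 'a set" where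
  "msupp \<nu> = {x. \<forall>r>0. emeasure \<nu> (ball x r) > 0}"

definition assouad_dim_measure :: "'a::metric_space measure \<Rightarrow> ereal" where
  "assouad_dim_measure \<nu> = Inf (ereal ` {s. s \<ge> 0 \<and> (\<exists>C>0. \<forall>x\<in>msupp \<nu>. \<forall>r R.
       0 < r \<and> r < R \<and> R < diameter (msupp \<nu>) \<longrightarrow>
       measure \<nu> (ball x R) / measure \<nu> (ball x r) \<le> C * (R / r) powr s)})"

definition lam1_ex :: "real \<Rightarrow> real \<Rightarrow> nat \<Rightarrow> real" where
  "lam1_ex a1 e i = (if i = 2 then 1 - a1 else a1 - e)"
definition lam2_ex :: "real \<Rightarrow> real \<Rightarrow> nat \<Rightarrow> real" where
  "lam2_ex a1 e i = (if i = 2 then 1/2 else 1/4 - e)"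
definition t1_ex :: "real \<Rightarrow> real \<Rightarrow> nat \<Rightarrow> real" where
  "t1_ex a1 e i = (if i = 2 then 0 else 1 - a1 + e)"
definition t2_ex :: "real \<Rightarrow> real \<Rightarrow> nat \<Rightarrow> real" where
  "t2_ex a1 e i = (if i = 1 then 0 else if i = 2 then 1/4 else 3/4 + e)"

definition f_ex :: "real \<Rightarrow> real \<Rightarrow> nat \<Rightarrow> real \<times> real \<Rightarrow> real \<times> real" where
  "f_ex a1 e = imap (lam1_ex a1 e) (lam2_ex a1 e) (t1_ex a1 e) (t2_ex a1 e)"

definition q_ex :: "real \<Rightarrow> real \<Rightarrow> nat \<Rightarrow> real" where
  "q_ex a1 e = q12 (lam1_ex a1 e) (lam2_ex a1 e) (t1_ex a1 e) (t2_ex a1 e)"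

end

(* Points of F are coded by infinite words over {1,2,3}: the word w is sent to the limit of
   f_(w 0) o ... o f_(w (n-1)) applied to the origin, and the level-n rectangle containing that
   point has width hlen w n and height vlen w n.  The maps 1 and 3 share their first coordinate,
   so these rectangles are arranged in columns, and since distinct rectangles are separated, the
   ball of radius R about the point coded by w is comparable to the set of words that agree with w
   letter by letter while the height exceeds R, and column by column while the width exceeds R.
   Under the Bernoulli measure with weights q^(1,2) this set has measure hlen^s0 times a product
   of conditional column weights, and between two scales that product decays at most like
   vlen^s1, where s1 = log_(1/4-e) (1/2).  Hence nu(B(x,R)) <= C (R/r)^D nu(B(x,r)) with
   D = s0 + s1, which bounds dim_A nu and, by a packing argument, dim_A F from above by D.
   Both bounds are attained near the point x coded by 111...: there nu(B(x,r)) <= (r/e)^D, and a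
   ball of radius about (a1-e)^n carries measure about (a1-e)^(n D), whereas a ball of radius
   about (1/4-e)^n meets the words beginning with n letters from {1,3} in measure at most
   (1/4-e)^(n D), so about ((a1-e)/(1/4-e))^(n D) such balls are needed to cover it.  Every a1 in
   (1/3, 1/2) works as soon as e < 1/8. *)
theory Submission
  imports Defs "HOL-Library.Omega_Words_Fun"
begin

definition word_prod :: "(nat \<Rightarrow> real) \<Rightarrow> (nat \<Rightarrow> nat) \<Rightarrow> nat \<Rightarrow> real" where
  "word_prod l w n = (\<Prod>k<n. l (w k))"

lemma word_prod_0 [simp]: "word_prod l w 0 = 1"
  by (simp add: word_prod_def)

lemma word_prod_Suc: "word_prod l w (Suc n) = word_prod l w n * l (w n)"
  by (simp add: word_prod_def)

lemma word_prod_nonneg: "(\<And>i. 0 \<le> l i) \<Longrightarrow> 0 \<le> word_prod l w n"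
  unfolding word_prod_def by (intro prod_nonneg) auto

lemma word_prod_pos: "(\<And>i. 0 < l i) \<Longrightarrow> 0 < word_prod l w n"
  unfolding word_prod_def by (intro prod_pos) auto

lemma word_prod_mono:
  "(\<And>i. 0 \<le> l i) \<Longrightarrow> (\<And>i. l i \<le> l' i) \<Longrightarrow> word_prod l w n \<le> word_prod l' w n"
  unfolding word_prod_def by (intro prod_mono) auto

lemma word_prod_le_power:
  "(\<And>i. 0 \<le> l i) \<Longrightarrow> (\<And>i. l i \<le> c) \<Longrightarrow> word_prod l w n \<le> c ^ n"
proof -
  assume "\<And>i. 0 \<le> l i" "\<And>i. l i \<le> c"
  then have "word_prod l w n \<le> word_prod (\<lambda>_. c) w n" by (rule word_prod_mono)
  then show ?thesis by (simp add: word_prod_def)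
qed

lemma word_prod_cong:
  "(\<And>k. k < n \<Longrightarrow> l (w k) = l' (w' k)) \<Longrightarrow> word_prod l w n = word_prod l' w' n"
  unfolding word_prod_def by (intro prod.cong) auto

lemma word_prod_add: "word_prod l w (j + n) = word_prod l w j * word_prod l (suffix j w) n"
  by (induction n) (simp_all add: word_prod_Suc)

lemma word_prod_antimono:
  assumes "\<And>i. 0 \<le> l i" "\<And>i. l i \<le> 1" "m \<le> n"
  shows "word_prod l w n \<le> word_prod l w m"
proof -
  obtain d where n: "n = m + d" using \<open>m \<le> n\<close> le_iff_add by blast
  have "word_prod l (suffix m w) d \<le> 1"
    using word_prod_le_power[of l 1] assms(1,2) by simp
  then show ?thesis
    unfolding n word_prod_add using word_prod_nonneg[OF assms(1)] by (simp add: mult_left_le)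
qed

lemma word_prod_powr:
  "(\<And>i. 0 \<le> l i) \<Longrightarrow> word_prod l w n powr p = word_prod (\<lambda>i. l i powr p) w n"
  unfolding word_prod_def by (simp add: prod_powr_distrib)

lemma word_prod_ratio_le:
  assumes l': "\<And>i. 0 \<le> l' i" and le: "\<And>i. l' i \<le> l i" and "m \<le> n"
  shows "word_prod l w m * word_prod l' w n \<le> word_prod l w n * word_prod l' w m"
proof -
  obtain d where n: "n = m + d" using \<open>m \<le> n\<close> le_iff_add by blast
  have l: "0 \<le> l i" for i using l' le order_trans by blast
  have "word_prod l w m * word_prod l' w m * word_prod l' (suffix m w) d
      \<le> word_prod l w m * word_prod l' w m * word_prod l (suffix m w) d"
    using word_prod_nonneg[of l w m] word_prod_nonneg[of l' w m] l l'
    by (intro mult_left_mono word_prod_mono[OF l' le]) auto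
  then show ?thesis unfolding n word_prod_add by (simp add: ac_simps)
qed

definition word_series :: "(nat \<Rightarrow> real) \<Rightarrow> (nat \<Rightarrow> real) \<Rightarrow> (nat \<Rightarrow> nat) \<Rightarrow> real" where
  "word_series l t w = (\<Sum>k. word_prod l w k * t (w k))"

definition stop_time :: "(nat \<Rightarrow> real) \<Rightarrow> (nat \<Rightarrow> nat) \<Rightarrow> real \<Rightarrow> nat" where
  "stop_time l w r = (LEAST n. word_prod l w n < r)"

locale contracting_weights =
  fixes l t :: "nat \<Rightarrow> real" and c :: real
  assumes weight_pos: "0 < l i" and weight_le: "l i \<le> c" and contraction: "c < 1"
    and translation_bounded: "\<bar>t i\<bar> \<le> 1"
begin

lemma prod_pos: "0 < word_prod l w n"
  by (rule word_prod_pos[OF weight_pos])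

lemma prod_le_power: "word_prod l w n \<le> c ^ n"
  by (rule word_prod_le_power[OF less_imp_le[OF weight_pos] weight_le])

lemma c_pos: "0 < c"
  using weight_pos[of 0] weight_le[of 0] by linarith

lemma prod_times_bounded_tendsto_0:
  assumes "\<And>k. \<bar>x k\<bar> \<le> B"
  shows "(\<lambda>k. word_prod l w k * x k) \<longlonglongrightarrow> 0"
proof (rule Lim_null_comparison)
  show "\<forall>\<^sub>F k in sequentially. norm (word_prod l w k * x k) \<le> c ^ k * B"
    using prod_le_power prod_pos assms c_pos
    by (intro always_eventually allI) (simp add: abs_mult abs_of_pos mult_mono)
  show "(\<lambda>k. c ^ k * B) \<longlonglongrightarrow> 0"
    using c_pos contraction by (intro tendsto_mult_left_zero LIMSEQ_power_zero) auto
qed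

lemma summable_series_terms: "summable (\<lambda>k. word_prod l w k * t (w k))"
proof (rule summable_comparison_test')
  show "summable (\<lambda>k. c ^ k)" using c_pos contraction by (intro summable_geometric) simp
  show "norm (word_prod l w k * t (w k)) \<le> c ^ k" for k
    using prod_le_power[of w k] prod_pos[of w k] translation_bounded[of "w k"]
    by (simp add: abs_mult abs_of_pos) (metis mult_right_le_one_le abs_ge_zero order_trans
        less_imp_le)
qed

lemma partial_series_tendsto:
  assumes "\<And>k. \<bar>x k\<bar> \<le> B"
  shows "(\<lambda>k. (\<Sum>j<k. word_prod l w j * t (w j)) + word_prod l w k * x k) \<longlonglongrightarrow> word_series l t w"
  using tendsto_add[OF summable_LIMSEQ[OF summable_series_terms]
      prod_times_bounded_tendsto_0[OF assms]]
  by (simp add: word_series_def)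

lemma series_suffix:
  "word_series l t w
    = (\<Sum>k<j. word_prod l w k * t (w k)) + word_prod l w j * word_series l t (suffix j w)"
proof -
  have "word_series l t w
      = (\<Sum>n. word_prod l w (n + j) * t (w (n + j))) + (\<Sum>k<j. word_prod l w k * t (w k))"
    unfolding word_series_def by (rule suminf_split_initial_segment[OF summable_series_terms])
  also have "(\<Sum>n. word_prod l w (n + j) * t (w (n + j)))
      = (\<Sum>n. word_prod l w j * (word_prod l (suffix j w) n * t (suffix j w n)))"
    by (intro suminf_cong) (simp add: word_prod_add[of l w j, symmetric] add.commute)
  also have "\<dots> = word_prod l w j * word_series l t (suffix j w)"
    unfolding word_series_def by (rule suminf_mult[OF summable_series_terms])
  finally show ?thesis by simp
qed

lemma series_step: "word_series l t w = l (w 0) * word_series l t (suffix 1 w) + t (w 0)"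
  using series_suffix[of w 1] by (simp add: word_prod_def)

lemma series_diff:
  assumes "\<And>k. k < j \<Longrightarrow> l (w k) = l (w' k) \<and> t (w k) = t (w' k)"
  shows "word_series l t w - word_series l t w'
    = word_prod l w j * (word_series l t (suffix j w) - word_series l t (suffix j w'))"
proof -
  have "word_prod l w j = word_prod l w' j" by (rule word_prod_cong) (use assms in auto)
  moreover have "(\<Sum>k<j. word_prod l w k * t (w k)) = (\<Sum>k<j. word_prod l w' k * t (w' k))"
    using assms by (intro sum.cong refl arg_cong2[where f = "(*)"] word_prod_cong) auto
  ultimately show ?thesis
    using series_suffix[of w j] series_suffix[of w' j] by (simp add: algebra_simps)
qed

lemma stop_time_exists: "0 < r \<Longrightarrow> \<exists>n. word_prod l w n < r"
proof -
  assume "0 < r"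
  then obtain n where "c ^ n < r" using real_arch_pow_inv[of r c] c_pos contraction by auto
  then show ?thesis using prod_le_power[of w n] by (meson le_less_trans)
qed

lemma prod_stop_time_less: "0 < r \<Longrightarrow> word_prod l w (stop_time l w r) < r"
  unfolding stop_time_def by (rule LeastI_ex[OF stop_time_exists])

lemma le_prod_before_stop_time: "n < stop_time l w r \<Longrightarrow> r \<le> word_prod l w n"
  unfolding stop_time_def using not_less_Least by (metis not_less)

lemma stop_time_le: "word_prod l w n < r \<Longrightarrow> stop_time l w r \<le> n"
  unfolding stop_time_def by (rule Least_le)

lemma prod_stop_time_ge:
  assumes "0 < r" "r \<le> 1" "\<And>i. m \<le> l i" "0 \<le> m"
  shows "r * m \<le> word_prod l w (stop_time l w r)"
proof (cases "stop_time l w r")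
  case 0
  then show ?thesis using prod_stop_time_less[OF assms(1), of w] assms(2) by simp
next
  case (Suc n)
  then have "r \<le> word_prod l w n" by (intro le_prod_before_stop_time) simp
  then have "r * m \<le> word_prod l w n * l (w n)" using assms by (intro mult_mono) auto
  then show ?thesis using Suc by (simp add: word_prod_Suc)
qed

lemma stop_time_antimono: "0 < r \<Longrightarrow> r \<le> R \<Longrightarrow> stop_time l w R \<le> stop_time l w r"
  using prod_stop_time_less[of r w] by (intro stop_time_le) linarith

lemma prod_stop_time_ratio:
  assumes "0 < R" "0 < r" "r \<le> 1" "0 < m" "\<And>i. m \<le> l i"
  shows "word_prod l w (stop_time l w R) \<le> R / (r * m) * word_prod l w (stop_time l w r)"
proof -
  have "word_prod l w (stop_time l w R) < R / (r * m) * (r * m)"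
    using prod_stop_time_less[OF assms(1)] assms(2,4) by simp
  also have "\<dots> \<le> R / (r * m) * word_prod l w (stop_time l w r)"
    using prod_stop_time_ge[OF assms(2,3,5)] assms by (intro mult_left_mono) auto
  finally show ?thesis by simp
qed

end

section \<open>Bernoulli measures on words\<close>

abbreviation bernoulli_measure :: "'a pmf \<Rightarrow> (nat \<Rightarrow> 'a) measure" where
  "bernoulli_measure p \<equiv> Pi\<^sub>M UNIV (\<lambda>_. measure_pmf p)"

lemma prob_space_bernoulli_measure: "prob_space (bernoulli_measure p)"
  by (rule prob_space_PiM) (simp add: prob_space_measure_pmf)

lemma space_bernoulli_measure [simp]: "space (bernoulli_measure p) = UNIV"
  by (simp add: space_PiM)

lemma sets_letter: "{w. w k \<in> A} \<in> sets (bernoulli_measure p)"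
  using measurable_sets[OF measurable_component_singleton[of k UNIV "\<lambda>_. measure_pmf p"], of A]
  by (simp add: vimage_def)

lemma sets_cylinder: "finite J \<Longrightarrow> {w. \<forall>i\<in>J. w i \<in> S i} \<in> sets (bernoulli_measure p)"
proof (induction J rule: finite_induct)
  case (insert j J)
  have "{w. \<forall>i\<in>insert j J. w i \<in> S i} = {w. w j \<in> S j} \<inter> {w. \<forall>i\<in>J. w i \<in> S i}" by auto
  then show ?case by (simp only:) (rule sets.Int[OF sets_letter insert.IH])
qed (use sets.top[of "bernoulli_measure p"] in simp)

lemma sets_funcset: "UNIV \<rightarrow> A \<in> sets (bernoulli_measure p)"
proof -
  have "UNIV \<rightarrow> A = (\<Inter>k. {w. w k \<in> A})" by auto
  then show ?thesis using sets_letter by (auto intro: sets.countable_INT')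
qed

lemma measure_cylinder:
  assumes "finite J"
  shows "measure (bernoulli_measure p) {w. \<forall>i\<in>J. w i \<in> S i} = (\<Prod>i\<in>J. measure_pmf.prob p (S i))"
proof -
  interpret product_prob_space "\<lambda>_::nat. measure_pmf p" UNIV
    by (simp add: product_prob_space_def product_prob_space_axioms_def product_sigma_finite_def
        prob_space_measure_pmf prob_space_imp_sigma_finite)
  have "emeasure (bernoulli_measure p) {w. \<forall>i\<in>J. w i \<in> S i}
      = (\<Prod>i\<in>J. emeasure (measure_pmf p) (S i))"
    using emeasure_PiM_Collect[of J S] assms by (simp add: space_PiM)
  then show ?thesis
    by (simp add: P.emeasure_eq_measure measure_pmf.emeasure_eq_measure prod_ennreal prod_nonneg)
qed

lemma AE_bernoulli_measure_funcset: "AE w in bernoulli_measure p. w \<in> UNIV \<rightarrow> set_pmf p"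
proof -
  have "AE w in bernoulli_measure p. w k \<in> set_pmf p" for k
    by (intro AE_PiM_component) (auto simp: prob_space_measure_pmf AE_measure_pmf)
  then show ?thesis by (simp add: AE_all_countable Pi_iff)
qed

lemma measure_bernoulli_measure_restrict:
  "A \<in> sets (bernoulli_measure p) \<Longrightarrow>
    measure (bernoulli_measure p) A = measure (bernoulli_measure p) (A \<inter> (UNIV \<rightarrow> set_pmf p))"
proof (rule measure_eq_AE)
  show "AE w in bernoulli_measure p. w \<in> A \<longleftrightarrow> w \<in> A \<inter> (UNIV \<rightarrow> set_pmf p)"
    using AE_bernoulli_measure_funcset[of p] by eventually_elim auto
qed (use sets_funcset in auto)

section \<open>Coding the attractor of a diagonal affine IFS\<close>

lemma dist_ge_coordinates: "\<bar>fst p - fst q\<bar> \<le> dist p q" "\<bar>snd p - snd q\<bar> \<le> dist p q"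
  for p q :: "real \<times> real"
  using dist_fst_le[of p q] dist_snd_le[of p q] by (simp_all add: dist_real_def)

abbreviation words :: "(nat \<Rightarrow> nat) set" where
  "words \<equiv> UNIV \<rightarrow> idx"

locale diagonal_ifs =
  horiz: contracting_weights lam1 t1 c + vert: contracting_weights lam2 t2 c
  for lam1 lam2 t1 t2 :: "nat \<Rightarrow> real" and c :: real
begin

abbreviation f :: "nat \<Rightarrow> real \<times> real \<Rightarrow> real \<times> real" where
  "f \<equiv> imap lam1 lam2 t1 t2"

definition code_point :: "(nat \<Rightarrow> nat) \<Rightarrow> real \<times> real" where
  "code_point w = (word_series lam1 t1 w, word_series lam2 t2 w)"

lemma comp_prefix_eq:
  "comp_prefix f w k p = ((\<Sum>j<k. word_prod lam1 w j * t1 (w j)) + word_prod lam1 w k * fst p,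
                          (\<Sum>j<k. word_prod lam2 w j * t2 (w j)) + word_prod lam2 w k * snd p)"
  by (induction k arbitrary: p) (simp_all add: imap_def word_prod_Suc algebra_simps)

lemma comp_prefix_tendsto:
  assumes "\<And>k. norm (p k) \<le> B"
  shows "(\<lambda>k. comp_prefix f w k (p k)) \<longlonglongrightarrow> code_point w"
proof -
  have "\<bar>fst (p k)\<bar> \<le> B" "\<bar>snd (p k)\<bar> \<le> B" for k
    using assms[of k] norm_fst_le[of "fst (p k)" "snd (p k)"]
      norm_snd_le[of "snd (p k)" "fst (p k)"]
    by auto
  then show ?thesis unfolding comp_prefix_eq code_point_def
    by (intro tendsto_Pair horiz.partial_series_tendsto vert.partial_series_tendsto) auto
qed

lemma coding_eq: "coding f = code_point"
  unfolding coding_def by (intro ext limI comp_prefix_tendsto[of _ 0]) simp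

lemma code_point_suffix: "code_point (suffix j w) = f (w j) (code_point (suffix (Suc j) w))"
  using horiz.series_step[of "suffix j w"] vert.series_step[of "suffix j w"]
  by (simp add: code_point_def imap_def)

lemma code_point_in_invariant:
  assumes "closed S" "S \<noteq> {}" and invariant: "\<And>k. f (w k) ` S \<subseteq> S"
  shows "code_point w \<in> S"
proof -
  obtain p where p: "p \<in> S" using assms(2) by auto
  have "comp_prefix f w k q \<in> S" if "q \<in> S" for k q
    using that
  proof (induction k arbitrary: q)
    case (Suc k)
    then show ?case using invariant[of k] by (simp add: image_subset_iff)
  qed simp
  then have "comp_prefix f w k p \<in> S" for k using p by blast
  moreover have "(\<lambda>k. comp_prefix f w k p) \<longlonglongrightarrow> code_point w"
    by (rule comp_prefix_tendsto[of _ "norm p"]) simp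
  ultimately show ?thesis by (rule closed_sequentially[OF assms(1)])
qed

lemma code_image_subset_attractor:
  assumes "closed F" "F \<noteq> {}" "F = (\<Union>i\<in>idx. f i ` F)"
  shows "code_point ` words \<subseteq> F"
proof (rule image_subsetI)
  fix w :: "nat \<Rightarrow> nat" assume "w \<in> words"
  then have "f (w k) ` F \<subseteq> F" for k by (subst (2) assms(3)) auto
  then show "code_point w \<in> F" by (rule code_point_in_invariant[OF assms(1,2)])
qed

text \<open>Follow preimages under the maps back through \<open>F\<close>; the compositions then converge to
  the coded point.\<close>
lemma attractor_subset_code_image:
  assumes "compact F" "F = (\<Union>i\<in>idx. f i ` F)"
  shows "F \<subseteq> code_point ` words"
proof
  fix x assume x: "x \<in> F"
  have "\<forall>y\<in>F. \<exists>iz. fst iz \<in> idx \<and> snd iz \<in> F \<and> y = f (fst iz) (snd iz)"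
  proof
    fix y assume "y \<in> F"
    then have "y \<in> (\<Union>i\<in>idx. f i ` F)" using assms(2) by blast
    then show "\<exists>iz. fst iz \<in> idx \<and> snd iz \<in> F \<and> y = f (fst iz) (snd iz)" by force
  qed
  then obtain g where
    g: "\<And>y. y \<in> F \<Longrightarrow> fst (g y) \<in> idx \<and> snd (g y) \<in> F \<and> y = f (fst (g y)) (snd (g y))"
    by metis
  define ys where "ys k = ((snd \<circ> g) ^^ k) x" for k
  define w where "w k = fst (g (ys k))" for k
  have ysF: "ys k \<in> F" for k
    by (induction k) (use x g in \<open>auto simp: ys_def\<close>)
  have w: "w \<in> words" unfolding w_def using g[OF ysF] by blast
  have "comp_prefix f w k (ys k) = x" for k
  proof (induction k)
    case (Suc k)
    have "f (w k) (ys (Suc k)) = ys k" using g[OF ysF[of k]] by (simp add: w_def ys_def)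
    then show ?case using Suc by simp
  qed (simp add: ys_def)
  moreover obtain B where "\<And>y. y \<in> F \<Longrightarrow> norm y \<le> B"
    using compact_imp_bounded[OF assms(1)] by (auto simp: bounded_iff)
  then have "(\<lambda>k. comp_prefix f w k (ys k)) \<longlonglongrightarrow> code_point w"
    using ysF by (intro comp_prefix_tendsto[of _ B]) auto
  ultimately have "x = code_point w" using LIMSEQ_unique[OF tendsto_const] by simp
  with w show "x \<in> code_point ` words" by blast
qed

lemma attractor_eq_code_image:
  assumes "compact F" "F \<noteq> {}" "F = (\<Union>i\<in>idx. f i ` F)"
  shows "F = code_point ` words"
  using compact_imp_closed[OF assms(1)] assms
  by (intro subset_antisym[OF attractor_subset_code_image code_image_subset_attractor])

lemma code_point_measurable: "code_point \<in> borel_measurable (bernoulli_measure p)"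
proof (rule borel_measurable_LIMSEQ_metric)
  show "(\<lambda>k. comp_prefix f w k (0, 0)) \<longlonglongrightarrow> code_point w" for w
    by (rule comp_prefix_tendsto[of _ 0]) simp
  show "(\<lambda>w. comp_prefix f w k (0, 0)) \<in> borel_measurable (bernoulli_measure p)" for k
    unfolding comp_prefix_eq word_prod_def by measurable
qed

end

section \<open>Covering numbers and doubling measures\<close>

lemma exponent_nonpos_if_powr_bounded:
  fixes a B :: real
  assumes "\<And>M. \<exists>q\<ge>M. q powr a \<le> B"
  shows "a \<le> 0"
proof (rule ccontr)
  assume "\<not> a \<le> 0"
  define M where "M = (max B 1 + 1) powr (1 / a)"
  have M: "0 < M" by (simp add: M_def)
  obtain q where q: "M \<le> q" "q powr a \<le> B" using assms by blast
  have "max B 1 + 1 = M powr a" using \<open>\<not> a \<le> 0\<close> by (simp add: M_def powr_powr)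
  also have "\<dots> \<le> q powr a" using M q(1) \<open>\<not> a \<le> 0\<close> by (intro powr_mono2) auto
  finally show False using q(2) by linarith
qed

lemma cover_num_le_card: "finite P \<Longrightarrow> E \<subseteq> (\<Union>p\<in>P. cball p r) \<Longrightarrow> cover_num E r \<le> card P"
  unfolding cover_num_def by (rule Least_le) blast

lemma optimal_cover_exists:
  assumes "compact K" "E \<subseteq> K" "0 < r"
  obtains C where "finite C" "card C = cover_num E r" "E \<subseteq> (\<Union>c\<in>C. cball c r)"
proof -
  obtain C where C: "finite C" "K \<subseteq> (\<Union>c\<in>C. ball c r)"
    by (rule compactE_image[OF assms(1), of K "\<lambda>c. ball c r"]) (use assms(3) in auto)
  have "(\<Union>c\<in>C. ball c r) \<subseteq> (\<Union>c\<in>C. cball c r)" by (intro UN_mono) auto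
  then have "E \<subseteq> (\<Union>c\<in>C. cball c r)" using C(2) assms(2) by (meson order_trans)
  then have "\<exists>n C. finite C \<and> card C = n \<and> E \<subseteq> (\<Union>c\<in>C. cball c r)"
    using C(1) by blast
  from LeastI_ex[OF this] show ?thesis using that unfolding cover_num_def by blast
qed

text \<open>A maximal \<open>r\<close>-separated subset of \<open>E\<close> is an \<open>r\<close>-cover of \<open>E\<close>.\<close>
lemma cover_num_le_packing_bound:
  assumes "0 \<le> r"
    and packing: "\<And>P. finite P \<Longrightarrow> P \<subseteq> E \<Longrightarrow> (\<forall>p\<in>P. \<forall>q\<in>P. p \<noteq> q \<longrightarrow> r < dist p q)
      \<Longrightarrow> real (card P) \<le> M"
  shows "real (cover_num E r) \<le> M"
proof -
  define S where "S = {P. finite P \<and> P \<subseteq> E \<and> (\<forall>p\<in>P. \<forall>q\<in>P. p \<noteq> q \<longrightarrow> r < dist p q)}"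
  obtain N :: nat where "M < N" using reals_Archimedean2 by blast
  then have "card P < N" if "P \<in> S" for P
    using packing[of P] that unfolding S_def by auto
  moreover have "{} \<in> S" by (simp add: S_def)
  ultimately obtain P where P: "P \<in> S" and maximal: "\<And>P'. P' \<in> S \<Longrightarrow> card P' \<le> card P"
    using ex_has_greatest_nat[of "\<lambda>P. P \<in> S" "{}" card N] by metis
  have "E \<subseteq> (\<Union>p\<in>P. cball p r)"
  proof
    fix y assume y: "y \<in> E"
    show "y \<in> (\<Union>p\<in>P. cball p r)"
    proof (rule ccontr)
      assume "y \<notin> (\<Union>p\<in>P. cball p r)"
      then have far: "\<forall>p\<in>P. r < dist p y" and "y \<notin> P" using assms(1) by auto
      then have "insert y P \<in> S" "card (insert y P) = Suc (card P)"
        using P y by (auto simp: S_def dist_commute)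
      then show False using maximal by fastforce
    qed
  qed
  then have "cover_num E r \<le> card P" using P by (intro cover_num_le_card) (auto simp: S_def)
  then show ?thesis using packing[of P] P unfolding S_def by force
qed

definition doubling_on :: "'a::metric_space measure \<Rightarrow> 'a set \<Rightarrow> real \<Rightarrow> real \<Rightarrow> bool" where
  "doubling_on M F C D \<longleftrightarrow> (\<forall>x\<in>F. \<forall>r R. 0 < r \<and> r < R \<longrightarrow>
     measure M (ball x R) \<le> C * (R / r) powr D * measure M (ball x r))"

lemma disjoint_family_on_half_balls:
  assumes "\<forall>p\<in>P. \<forall>q\<in>P. p \<noteq> q \<longrightarrow> r < dist p q"
  shows "disjoint_family_on (\<lambda>p. ball p (r / 2)) P"
  unfolding disjoint_family_on_def
proof (intro ballI impI)
  fix p q assume "p \<in> P" "q \<in> P" "p \<noteq> q"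
  then have "r < dist p q" using assms by blast
  show "ball p (r / 2) \<inter> ball q (r / 2) = {}"
  proof (rule ccontr)
    assume "ball p (r / 2) \<inter> ball q (r / 2) \<noteq> {}"
    then obtain y where "dist p y < r / 2" "dist q y < r / 2" by auto
    then show False using dist_triangle[of p q y] dist_commute[of y q] \<open>r < dist p q\<close> by linarith
  qed
qed

lemma measure_ball_le_of_doubling:
  fixes M :: "'a::metric_space measure"
  assumes "finite_measure M" "sets M = sets borel" "doubling_on M F C D"
    and "p \<in> F" "dist x p < R" "0 < \<rho>" "\<rho> < 2 * R"
  shows "measure M (ball x R) \<le> C * (2 * R / \<rho>) powr D * measure M (ball p \<rho>)"
proof -
  have "ball x R \<subseteq> ball p (2 * R)"
  proof
    fix y assume "y \<in> ball x R"
    then show "y \<in> ball p (2 * R)" using assms(5) dist_triangle[of p y x]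
      by (simp add: dist_commute)
  qed
  then have "measure M (ball x R) \<le> measure M (ball p (2 * R))"
    using assms(2) by (intro finite_measure.finite_measure_mono[OF assms(1)]) auto
  also have "\<dots> \<le> C * (2 * R / \<rho>) powr D * measure M (ball p \<rho>)"
    using assms(3,4,6,7) unfolding doubling_on_def by blast
  finally show ?thesis .
qed

text \<open>Half-balls around the points of an \<open>r\<close>-separated set are disjoint, lie in \<open>ball x (2 R)\<close>,
  and by doubling each carries a fixed fraction of the measure of \<open>ball x R\<close>.\<close>
lemma card_separated_le_of_doubling:
  fixes M :: "'a::metric_space measure"
  assumes M: "finite_measure M" "sets M = sets borel"
    and ball_pos: "\<And>x r. x \<in> F \<Longrightarrow> 0 < r \<Longrightarrow> 0 < measure M (ball x r)"
    and doubling: "doubling_on M F C D"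
    and x: "x \<in> F" and r: "0 < r" "r < R"
    and P: "finite P" "P \<subseteq> ball x R \<inter> F"
    and separated: "\<forall>p\<in>P. \<forall>q\<in>P. p \<noteq> q \<longrightarrow> r < dist p q"
  shows "real (card P) \<le> C * C * 8 powr D * (R / r) powr D"
proof -
  interpret finite_measure M by (rule M(1))
  have balls: "ball y \<rho> \<in> sets M" for y \<rho> by (simp add: M(2))
  define mR where "mR = measure M (ball x R)"
  have mR: "0 < mR" unfolding mR_def using ball_pos[OF x] r by simp
  have "mR \<le> C * (2 * R / R) powr D * measure M (ball x R)"
    unfolding mR_def using r by (intro measure_ball_le_of_doubling[OF M doubling x]) auto
  then have "1 \<le> C * 2 powr D" using mR r unfolding mR_def by simp
  then have C: "0 < C" using mult_nonpos_nonneg[of C "2 powr D"] by force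
  define K where "K = C * (4 * R / r) powr D"
  have K: "0 < K" unfolding K_def using C r by simp
  have "mR \<le> K * measure M (ball p (r / 2))" if "p \<in> P" for p
    using that P r unfolding mR_def K_def
    by (intro order_trans[OF measure_ball_le_of_doubling[OF M doubling, of p x R "r / 2"]]) auto
  then have "real (card P) * (mR / K) \<le> (\<Sum>p\<in>P. measure M (ball p (r / 2)))"
    using sum_mono[of P "\<lambda>_. mR / K"] K by (simp add: field_simps)
  also have "\<dots> = measure M (\<Union>p\<in>P. ball p (r / 2))"
    using P disjoint_family_on_half_balls[OF separated] balls
    by (intro finite_measure_finite_Union[symmetric]) auto
  also have "\<dots> \<le> measure M (ball x (2 * R))"
  proof (rule finite_measure_mono[OF _ balls], clarify)
    fix p y assume "p \<in> P" "y \<in> ball p (r / 2)"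
    then have "dist x p < R" "dist p y < r / 2" using P by auto
    then show "y \<in> ball x (2 * R)" using dist_triangle[of x y p] r by simp
  qed
  also have "\<dots> \<le> C * 2 powr D * mR"
    using doubling[unfolded doubling_on_def, rule_format, OF x, of R "2 * R"] r
    unfolding mR_def by simp
  finally have "real (card P) \<le> C * 2 powr D * K"
    using mR K by (simp add: field_simps)
  also have "C * 2 powr D * K = C * C * 8 powr D * (R / r) powr D"
    using r by (simp add: K_def powr_mult[symmetric] mult_ac)
  finally show ?thesis .
qed

lemma cover_num_le_of_doubling:
  fixes M :: "'a::metric_space measure"
  assumes "finite_measure M" "sets M = sets borel"
    and "\<And>x r. x \<in> F \<Longrightarrow> 0 < r \<Longrightarrow> 0 < measure M (ball x r)"
    and "doubling_on M F C D" "x \<in> F" "0 < r" "r < R"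
  shows "real (cover_num (ball x R \<inter> F) r) \<le> C * C * 8 powr D * (R / r) powr D"
  using assms by (intro cover_num_le_packing_bound card_separated_le_of_doubling) auto

lemma powr_le_scaled: "0 \<le> x \<Longrightarrow> x \<le> K * y \<Longrightarrow> 0 < K \<Longrightarrow> 0 \<le> t \<Longrightarrow> x powr t \<le> K powr t * y powr t"
  for x y K t :: real
  by (metis powr_mono2 powr_mult less_imp_le mult_nonneg_nonneg order_trans zero_le_mult_iff)

lemma moran_equation_unique:
  fixes x y :: real
  assumes "0 < x" "0 < y" "x + y \<le> 1"
  shows "\<exists>!s. x powr s + y powr s = 1"
proof -
  define g where "g s = x powr s + y powr s" for s
  have "x < 1" "y < 1" using assms by auto
  then have strict: "g s' < g s" if "s < s'" for s s'
    using powr_less_mono'[of x s s'] powr_less_mono'[of y s s'] assms that by (simp add: g_def)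
  have "\<exists>s. 0 \<le> s \<and> s \<le> 1 \<and> g s = 1"
  proof (rule IVT2)
    show "g 1 \<le> 1" "1 \<le> g 0" using assms by (simp_all add: g_def)
    show "\<forall>s. 0 \<le> s \<and> s \<le> 1 \<longrightarrow> isCont g s"
      unfolding g_def using assms by (auto intro!: continuous_intros)
  qed simp
  then obtain s where "g s = 1" by blast
  moreover have "s' = s" if "g s' = 1" for s'
    using strict[of s s'] strict[of s' s] that \<open>g s = 1\<close> by (cases s s' rule: linorder_cases) auto
  ultimately show ?thesis unfolding g_def by blast
qed

lemma moran_root_pos:
  fixes x y s :: real
  assumes "0 < x" "x < 1" "0 < y" "y < 1" "x powr s + y powr s = 1"
  shows "0 < s"
proof (rule ccontr)
  assume "\<not> 0 < s"
  then have "1 \<le> x powr s" "1 \<le> y powr s"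
    using powr_mono'[of s 0 x] powr_mono'[of s 0 y] assms by auto
  then show False using assms(5) by linarith
qed

locale example =
  fixes a1 e :: real
  assumes e_pos: "0 < e" and e_less: "e < 1/8" and a1_gt: "1/3 < a1" and a1_less: "a1 < 1/2"

sublocale example \<subseteq> diagonal_ifs "lam1_ex a1 e" "lam2_ex a1 e" "t1_ex a1 e" "t2_ex a1 e" "2/3"
  using example_axioms unfolding example_def
  by unfold_locales (auto simp: lam1_ex_def lam2_ex_def t1_ex_def t2_ex_def)

context example
begin

abbreviation "lam1 \<equiv> lam1_ex a1 e"
abbreviation "lam2 \<equiv> lam2_ex a1 e"
abbreviation "hlen \<equiv> word_prod lam1"
abbreviation "vlen \<equiv> word_prod lam2"

lemma f_ex_eq: "f_ex a1 e = f"
  by (simp add: f_ex_def)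

lemma lam1_ge: "1/8 \<le> lam1 i" and lam2_ge: "1/8 \<le> lam2 i" and lam2_le_lam1: "lam2 i \<le> lam1 i"
  using e_pos e_less a1_gt a1_less by (auto simp: lam1_ex_def lam2_ex_def)

lemma vlen_le_hlen: "vlen w n \<le> hlen w n"
  by (intro word_prod_mono lam2_le_lam1 less_imp_le[OF vert.weight_pos])

definition column :: "nat \<Rightarrow> nat" where
  "column i = (if i = 2 then 2 else 1)"

lemma horiz_data_column:
  "column i = column i' \<Longrightarrow> lam1 i = lam1 i' \<and> t1_ex a1 e i = t1_ex a1 e i'"
  by (simp add: column_def lam1_ex_def t1_ex_def split: if_splits)

definition rect :: "nat \<Rightarrow> (real \<times> real) set" where
  "rect i = (if i = 2 then {0..1 - a1} \<times> {1/4..3/4}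
             else if i = 1 then {1 - a1 + e..1} \<times> {0..1/4 - e}
             else {1 - a1 + e..1} \<times> {3/4 + e..1})"

lemma image_unit_sq_subset_rect: "f i ` unit_sq \<subseteq> rect i"
proof
  fix u assume "u \<in> f i ` unit_sq"
  then obtain x y where u: "u = f i (x, y)" and "(x, y) \<in> unit_sq" by auto
  then have "0 \<le> x" "x \<le> 1" "0 \<le> y" "y \<le> 1" by (auto simp: unit_sq_def)
  moreover have "0 \<le> a1 - e" "0 \<le> 1/4 - e" "0 \<le> 1 - a1"
    using e_pos e_less a1_gt a1_less by auto
  ultimately have "0 \<le> (a1 - e) * x" "(a1 - e) * x \<le> a1 - e"
    "0 \<le> (1 - a1) * x" "(1 - a1) * x \<le> 1 - a1"
    "0 \<le> (1/4 - e) * y" "(1/4 - e) * y \<le> 1/4 - e"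
    by (simp_all add: mult_left_le)
  then show "u \<in> rect i" unfolding u
    using \<open>0 \<le> y\<close> \<open>y \<le> 1\<close>
    by (auto simp: rect_def imap_def lam1_ex_def lam2_ex_def t1_ex_def t2_ex_def)
qed

lemma rect_subset_unit_sq: "rect i \<subseteq> unit_sq"
  using e_pos e_less a1_gt a1_less by (auto simp: rect_def unit_sq_def)

lemma code_point_in_unit_sq: "code_point w \<in> unit_sq"
proof (rule code_point_in_invariant)
  show "closed unit_sq" unfolding unit_sq_def by (intro closed_Times) auto
  show "unit_sq \<noteq> {}" by (auto simp: unit_sq_def)
  show "f (w k) ` unit_sq \<subseteq> unit_sq" for k
    using image_unit_sq_subset_rect rect_subset_unit_sq by blast
qed

lemma code_point_suffix_in_rect: "code_point (suffix j w) \<in> rect (w j)"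
  using code_point_suffix[of j w] image_unit_sq_subset_rect code_point_in_unit_sq by blast

lemma rect_separation:
  assumes "i \<in> idx" "i' \<in> idx" "i \<noteq> i'" "p \<in> rect i" "p' \<in> rect i'"
  shows "column i \<noteq> column i' \<Longrightarrow> e \<le> \<bar>fst p - fst p'\<bar>"
    and "column i = column i' \<Longrightarrow> 1/2 \<le> \<bar>snd p - snd p'\<bar>"
  using assms e_pos by (auto simp: idx_def column_def rect_def)

lemma code_point_diff:
  assumes "\<forall>k<a. w k = w' k" "\<forall>k<b. column (w k) = column (w' k)"
  shows "fst (code_point w) - fst (code_point w')
           = hlen w b * (fst (code_point (suffix b w)) - fst (code_point (suffix b w')))"
    and "snd (code_point w) - snd (code_point w')
           = vlen w a * (snd (code_point (suffix a w)) - snd (code_point (suffix a w')))"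
proof -
  show "fst (code_point w) - fst (code_point w')
           = hlen w b * (fst (code_point (suffix b w)) - fst (code_point (suffix b w')))"
    unfolding code_point_def fst_conv
    by (rule horiz.series_diff) (use assms(2) horiz_data_column in blast)
  show "snd (code_point w) - snd (code_point w')
           = vlen w a * (snd (code_point (suffix a w)) - snd (code_point (suffix a w')))"
    unfolding code_point_def snd_conv
    by (rule vert.series_diff) (use assms(1) in simp)
qed

lemma dist_code_point_ge_vlen:
  assumes w: "w \<in> words" "w' \<in> words" and agree: "\<forall>k<j. w k = w' k" and differ: "w j \<noteq> w' j"
  shows "e * vlen w j \<le> dist (code_point w) (code_point w')"
proof -
  have idx: "w j \<in> idx" "w' j \<in> idx" using w by (auto simp: Pi_iff)
  note sep = rect_separation[OF idx differ code_point_suffix_in_rect[of j w]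
      code_point_suffix_in_rect[of j w']]
  show ?thesis
  proof (cases "column (w j) = column (w' j)")
    case True
    have "1/2 * vlen w j \<le> \<bar>snd (code_point w) - snd (code_point w')\<bar>"
      using sep(2)[OF True] code_point_diff(2)[of j w w' 0] agree vert.prod_pos[of w j]
      by (simp add: abs_mult)
    moreover have "e * vlen w j \<le> 1/2 * vlen w j"
      using e_less vert.prod_pos[of w j] by (intro mult_right_mono) auto
    ultimately show ?thesis
      using dist_ge_coordinates(2)[of "code_point w" "code_point w'"] by linarith
  next
    case False
    then have "e * hlen w j \<le> \<bar>fst (code_point w) - fst (code_point w')\<bar>"
      using sep(1)[OF False] code_point_diff(1)[of 0 w w' j] agree horiz.prod_pos[of w j]
      by (simp add: abs_mult mult.commute)
    then show ?thesis
      using e_pos vlen_le_hlen[of w j] dist_ge_coordinates(1)[of "code_point w" "code_point w'"]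
      by (smt (verit) mult_left_mono)
  qed
qed

lemma dist_code_point_ge_hlen:
  assumes w: "w \<in> words" "w' \<in> words" and agree: "\<forall>k<j. column (w k) = column (w' k)"
    and differ: "column (w j) \<noteq> column (w' j)"
  shows "e * hlen w j \<le> dist (code_point w) (code_point w')"
proof -
  have "w j \<in> idx" "w' j \<in> idx" "w j \<noteq> w' j" using w differ by (auto simp: Pi_iff)
  then have "e \<le> \<bar>fst (code_point (suffix j w)) - fst (code_point (suffix j w'))\<bar>"
    using rect_separation(1) code_point_suffix_in_rect differ by blast
  then have "e * hlen w j \<le> \<bar>fst (code_point w) - fst (code_point w')\<bar>"
    using code_point_diff(1)[of 0 w w' j] agree horiz.prod_pos[of w j]
    by (simp add: abs_mult mult.commute)
  then show ?thesis using dist_ge_coordinates(1)[of "code_point w" "code_point w'"] by linarith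
qed

lemma dist_code_point_le:
  assumes "\<forall>k<a. w k = w' k" "\<forall>k<b. column (w k) = column (w' k)"
  shows "dist (code_point w) (code_point w') \<le> hlen w b + vlen w a"
proof -
  have unit: "\<bar>fst (code_point v) - fst (code_point v')\<bar> \<le> 1"
    "\<bar>snd (code_point v) - snd (code_point v')\<bar> \<le> 1" for v v'
    using code_point_in_unit_sq[of v] code_point_in_unit_sq[of v'] by (auto simp: unit_sq_def)
  have "\<bar>fst (code_point w) - fst (code_point w')\<bar> \<le> hlen w b"
    "\<bar>snd (code_point w) - snd (code_point w')\<bar> \<le> vlen w a"
    unfolding code_point_diff[OF assms] abs_mult
    using unit horiz.prod_pos[of w b] vert.prod_pos[of w a] by (simp_all add: mult_left_le)
  moreover have "dist (code_point w) (code_point w')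
      \<le> \<bar>fst (code_point w) - fst (code_point w')\<bar> + \<bar>snd (code_point w) - snd (code_point w')\<bar>"
    by (simp add: dist_prod_def dist_real_def sqrt_sum_squares_le_sum_abs)
  ultimately show ?thesis by linarith
qed

definition column_class :: "nat \<Rightarrow> nat set" where
  "column_class i = {j \<in> idx. column j = column i}"

text \<open>The code points of these words fill a set comparable to a ball around \<open>code_point w0\<close>.\<close>
definition approx_cyl :: "(nat \<Rightarrow> nat) \<Rightarrow> nat \<Rightarrow> nat \<Rightarrow> (nat \<Rightarrow> nat) set" where
  "approx_cyl w0 a b = {w. \<forall>k\<in>{..<b}. w k \<in> (if k < a then {w0 k} else column_class (w0 k))}"

lemma ball_subset_approx_cyl:
  assumes w0: "w0 \<in> words" and w: "w \<in> words" and d: "dist (code_point w0) (code_point w) < R"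
  shows "w \<in> approx_cyl w0 (stop_time lam2 w0 (R / e)) (stop_time lam1 w0 (R / e))"
proof -
  define a b where "a = stop_time lam2 w0 (R / e)" and "b = stop_time lam1 w0 (R / e)"
  have R_le: "R \<le> e * l" if "R / e \<le> l" for l using that e_pos by (simp add: field_simps)
  have letters: "w k = w0 k" if "k < a" for k
  proof (rule ccontr)
    assume "w k \<noteq> w0 k"
    then obtain j where j: "j < a" "w0 j \<noteq> w j" "\<forall>i<j. w0 i = w i"
      using exists_least_iff[of "\<lambda>j. j < a \<and> w0 j \<noteq> w j"] \<open>k < a\<close>
      by (metis order.strict_trans)
    have "e * vlen w0 j \<le> dist (code_point w0) (code_point w)"
      by (rule dist_code_point_ge_vlen[OF w0 w j(3,2)])
    moreover have "R \<le> e * vlen w0 j" using j(1) unfolding a_def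
      by (intro R_le vert.le_prod_before_stop_time)
    ultimately show False using d by linarith
  qed
  have columns: "column (w k) = column (w0 k)" if "k < b" for k
  proof (rule ccontr)
    assume "column (w k) \<noteq> column (w0 k)"
    then obtain j where
      j: "j < b" "column (w0 j) \<noteq> column (w j)" "\<forall>i<j. column (w0 i) = column (w i)"
      using exists_least_iff[of "\<lambda>j. j < b \<and> column (w0 j) \<noteq> column (w j)"] \<open>k < b\<close>
      by (metis order.strict_trans)
    have "e * hlen w0 j \<le> dist (code_point w0) (code_point w)"
      by (rule dist_code_point_ge_hlen[OF w0 w j(3,2)])
    moreover have "R \<le> e * hlen w0 j" using j(1) unfolding b_def
      by (intro R_le horiz.le_prod_before_stop_time)
    ultimately show False using d by linarith
  qed
  have "w k \<in> idx" for k using w by (auto simp: Pi_iff)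
  then show ?thesis using letters columns
    unfolding approx_cyl_def a_def[symmetric] b_def[symmetric] by (auto simp: column_class_def)
qed

lemma approx_cyl_subset_ball:
  assumes "w \<in> approx_cyl w0 a b" "a \<le> b"
  shows "dist (code_point w0) (code_point w) \<le> hlen w0 b + vlen w0 a"
proof (rule dist_code_point_le)
  have letter: "w k \<in> (if k < a then {w0 k} else column_class (w0 k))" if "k < b" for k
    using assms(1) that by (auto simp: approx_cyl_def)
  show "\<forall>k<a. w0 k = w k"
  proof (intro allI impI)
    fix k assume "k < a"
    then show "w0 k = w k" using letter[of k] assms(2) by auto
  qed
  show "\<forall>k<b. column (w0 k) = column (w k)"
  proof (intro allI impI)
    fix k assume "k < b"
    then show "column (w0 k) = column (w k)"
      using letter[of k] by (cases "k < a") (auto simp: column_class_def)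
  qed
qed

lemma stop_time_vert_le_horiz: "0 < r \<Longrightarrow> stop_time lam2 w r \<le> stop_time lam1 w r"
  using vlen_le_hlen horiz.prod_stop_time_less by (intro vert.stop_time_le) (meson le_less_trans)

section \<open>The measure nu and its values on balls\<close>

definition s0 :: real where
  "s0 = (THE s. (a1 - e) powr s + (1 - a1) powr s = 1)"

definition s1 :: real where
  "s1 = log (1/4 - e) (1/2)"

definition D :: real where
  "D = s0 + s1"

lemma s0_eq: "(a1 - e) powr s0 + (1 - a1) powr s0 = 1"
  unfolding s0_def
    by (rule theI'[OF moran_equation_unique]) (use e_pos e_less a1_gt a1_less in auto)

lemma s0_pos: "0 < s0"
proof -
  have "0 < a1 - e" "a1 - e < 1" "0 < 1 - a1" "1 - a1 < 1" using e_pos e_less a1_gt a1_less by auto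
  then show ?thesis using moran_root_pos s0_eq by blast
qed

lemma s1_eq: "(1/4 - e) powr s1 = 1/2"
  using e_pos e_less by (simp add: s1_def)

lemma s1_pos: "0 < s1"
  using e_pos e_less by (simp add: s1_def log_def divide_neg_neg)

lemma D_pos: "0 < D"
  using s0_pos s1_pos by (simp add: D_def)

definition q12_explicit :: "nat \<Rightarrow> real" where
  "q12_explicit j =
    (if j = 2 then (1 - a1) powr s0 else if j \<in> idx then (a1 - e) powr s0 / 2 else 0)"

lemma overlap1_iff: "overlap1 f i j \<longleftrightarrow> column i = column j"
proof
  assume "overlap1 f i j"
  then have "fst (f i (0, 0)) = fst (f j (0, 0))" by (auto simp: overlap1_def unit_sq_def)
  then show "column i = column j"
    using e_pos a1_less by (auto simp: column_def imap_def lam1_ex_def t1_ex_def split: if_splits)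
qed (auto simp: overlap1_def column_def imap_def lam1_ex_def t1_ex_def split: if_splits)

lemma I1_eq: "I1 f = {1, 2}"
proof -
  have "overlap1 f 1 3" "\<not> overlap1 f 1 2" by (simp_all add: overlap1_iff column_def)
  then show ?thesis by (auto simp: I1_def idx_def)
qed

lemma Pi1_eq: "Pi1 f j = column j"
  unfolding Pi1_def
proof (rule the_equality)
  show "column j \<in> I1 f \<and> overlap1 f (column j) j" by (simp add: I1_eq overlap1_iff column_def)
  fix i assume "i \<in> I1 f \<and> overlap1 f i j"
  then show "i = column j" by (auto simp: I1_eq overlap1_iff column_def)
qed

lemma q_ex_eq: "q_ex a1 e = q12_explicit"
proof
  fix j
  have fibre: "{j' \<in> idx. Pi1 f j' = 1} = {1, 3}" "{j' \<in> idx. Pi1 f j' = 2} = {2}"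
    by (auto simp: Pi1_eq idx_def column_def)
  have "(THE s. (\<Sum>i\<in>I1 f. lam1 i powr s) = 1) = s0"
    unfolding I1_eq s0_def by (simp add: lam1_ex_def)
  moreover have "(THE s. (\<Sum>j'\<in>{j' \<in> idx. Pi1 f j' = 1}. lam2 j' powr s) = 1) = s1"
  proof (rule the_equality)
    show "(\<Sum>j'\<in>{j' \<in> idx. Pi1 f j' = 1}. lam2 j' powr s1) = 1"
      unfolding fibre(1) using s1_eq by (simp add: lam2_ex_def)
    fix s assume "(\<Sum>j'\<in>{j' \<in> idx. Pi1 f j' = 1}. lam2 j' powr s) = 1"
    then have "(1/4 - e) powr s = (1/4 - e) powr s1" unfolding fibre using s1_eq
      by (simp add: lam2_ex_def)
    then show "s = s1" using e_pos e_less powr_inj by auto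
  qed
  moreover have "(THE s. (\<Sum>j'\<in>{j' \<in> idx. Pi1 f j' = 2}. lam2 j' powr s) = 1) = 0"
  proof (rule the_equality)
    show "(\<Sum>j'\<in>{j' \<in> idx. Pi1 f j' = 2}. lam2 j' powr 0) = 1"
      unfolding fibre(2) by (simp add: lam2_ex_def)
    fix s assume "(\<Sum>j'\<in>{j' \<in> idx. Pi1 f j' = 2}. lam2 j' powr s) = 1"
    then have "(1/2::real) powr s = (1/2) powr 0" unfolding fibre by (simp add: lam2_ex_def)
    then show "s = 0" using powr_inj[of "1/2::real" s 0] by simp
  qed
  ultimately show "q_ex a1 e j = q12_explicit j"
    unfolding q_ex_def q12_def Let_def
    using Pi1_eq s1_eq by (auto simp: q12_explicit_def lam1_ex_def lam2_ex_def idx_def column_def)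
qed

definition column_share :: "nat \<Rightarrow> real" where
  "column_share i = (if i = 2 then 1 else 1/2)"

abbreviation "share \<equiv> word_prod column_share"

lemma q12_explicit_factor: "i \<in> idx \<Longrightarrow> q12_explicit i = lam1 i powr s0 * column_share i"
  by (auto simp: q12_explicit_def column_share_def lam1_ex_def idx_def)

lemma sum_q12_explicit_column_class:
  "i \<in> idx \<Longrightarrow> (\<Sum>j\<in>column_class i. q12_explicit j) = lam1 i powr s0"
proof -
  assume "i \<in> idx"
  then have "column_class i = (if i = 2 then {2} else {1, 3})"
    by (auto simp: column_class_def column_def idx_def)
  then show ?thesis by (simp add: q12_explicit_def lam1_ex_def idx_def)
qed

lemma q12_explicit_nonneg: "0 \<le> q12_explicit j"
  by (simp add: q12_explicit_def)

lemma nn_integral_q12_explicit: "(\<integral>\<^sup>+j. ennreal (q12_explicit j) \<partial>count_space UNIV) = 1"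
proof -
  have "(\<integral>\<^sup>+j. ennreal (q12_explicit j) \<partial>count_space UNIV) = (\<Sum>j\<in>idx. ennreal (q12_explicit j))"
    by (rule nn_integral_count_space') (auto simp: q12_explicit_def idx_def)
  also have "\<dots> = ennreal (\<Sum>j\<in>idx. q12_explicit j)"
    by (rule sum_ennreal) (rule q12_explicit_nonneg)
  also have "(\<Sum>j\<in>idx. q12_explicit j) = 1"
    using s0_eq by (simp add: q12_explicit_def idx_def)
  finally show ?thesis by simp
qed

abbreviation "Q \<equiv> embed_pmf q12_explicit"

lemma pmf_Q: "pmf Q j = q12_explicit j"
  by (rule pmf_embed_pmf[OF q12_explicit_nonneg nn_integral_q12_explicit])

lemma set_pmf_Q: "set_pmf Q = idx"
proof -
  have "0 < (a1 - e) powr s0" "0 < (1 - a1) powr s0" using e_less a1_gt a1_less by auto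
  then show ?thesis
    by (auto simp: set_embed_pmf[OF q12_explicit_nonneg nn_integral_q12_explicit]
        q12_explicit_def idx_def)
qed

definition nu :: "(real \<times> real) measure" where
  "nu = distr (bernoulli_measure Q) borel code_point"

lemma bernoulli_proj_eq: "bernoulli_proj (f_ex a1 e) (q_ex a1 e) = nu"
  by (simp add: bernoulli_proj_def nu_def f_ex_eq q_ex_eq coding_eq)

lemma prob_space_nu: "prob_space nu"
  unfolding nu_def
  by (rule prob_space.prob_space_distr[OF prob_space_bernoulli_measure code_point_measurable])

lemma sets_nu [simp]: "sets nu = sets borel"
  by (simp add: nu_def)

lemma measure_nu:
  assumes "A \<in> sets borel"
  shows "measure nu A = measure (bernoulli_measure Q) {w \<in> words. code_point w \<in> A}"
proof -
  have "measure nu A = measure (bernoulli_measure Q) (code_point -` A)"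
    unfolding nu_def using assms by (simp add: measure_distr code_point_measurable)
  also have "\<dots> = measure (bernoulli_measure Q) (code_point -` A \<inter> words)"
    using measurable_sets[OF code_point_measurable assms]
    by (subst measure_bernoulli_measure_restrict) (auto simp: set_pmf_Q)
  also have "code_point -` A \<inter> words = {w \<in> words. code_point w \<in> A}" by auto
  finally show ?thesis .
qed

lemma finite_column_class: "finite (column_class i)"
  by (simp add: column_class_def idx_def)

lemma sets_approx_cyl: "approx_cyl w0 a b \<in> sets (bernoulli_measure Q)"
  unfolding approx_cyl_def by (rule sets_cylinder) simp

lemma measure_approx_cyl:
  assumes "w0 \<in> words" "a \<le> b"
  shows "measure (bernoulli_measure Q) (approx_cyl w0 a b) = hlen w0 b powr s0 * share w0 a"
proof -
  have w0: "w0 k \<in> idx" for k using assms(1) by (auto simp: Pi_iff)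
  have "measure (bernoulli_measure Q) (approx_cyl w0 a b)
      = (\<Prod>k<b. \<Sum>j\<in>(if k < a then {w0 k} else column_class (w0 k)). q12_explicit j)"
    unfolding approx_cyl_def measure_cylinder[OF finite_lessThan]
    by (intro prod.cong refl) (simp add: measure_measure_pmf_finite pmf_Q finite_column_class)
  also have "\<dots> = (\<Prod>k<b. lam1 (w0 k) powr s0 * (if k < a then column_share (w0 k) else 1))"
    by (intro prod.cong refl)
      (simp add: q12_explicit_factor[OF w0] sum_q12_explicit_column_class[OF w0])
  also have "\<dots> = (\<Prod>k<b. lam1 (w0 k) powr s0) * (\<Prod>k<b. if k < a then column_share (w0 k) else 1)"
    by (rule prod.distrib)
  also have "(\<Prod>k<b. lam1 (w0 k) powr s0) = hlen w0 b powr s0"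
    by (simp add: word_prod_def prod_powr_distrib less_imp_le[OF horiz.weight_pos])
  also have "(\<Prod>k<b. if k < a then column_share (w0 k) else 1)
      = (\<Prod>k\<in>{k \<in> {..<b}. k < a}. column_share (w0 k))"
    by (rule prod.inter_filter[symmetric]) simp
  also have "{k \<in> {..<b}. k < a} = {..<a}" using assms(2) by auto
  finally show ?thesis by (simp add: word_prod_def)
qed

lemma column_share_ge: "lam2 i powr s1 \<le> column_share i"
  using s1_eq s1_pos by (auto simp: column_share_def lam2_ex_def powr_le1)

lemma share_ratio_le:
  "m \<le> n \<Longrightarrow> share w m * vlen w n powr s1 \<le> share w n * vlen w m powr s1"
  using word_prod_ratio_le[of "\<lambda>i. lam2 i powr s1" column_share m n w] column_share_ge
  by (simp add: word_prod_powr less_imp_le[OF vert.weight_pos])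

interpretation P: prob_space "bernoulli_measure Q"
  by (rule prob_space_bernoulli_measure)

lemma sets_code_point_preimage:
  assumes "A \<in> sets borel"
  shows "{w \<in> words. code_point w \<in> A} \<in> sets (bernoulli_measure Q)"
proof -
  have "{w \<in> words. code_point w \<in> A} = code_point -` A \<inter> space (bernoulli_measure Q) \<inter> words"
    by auto
  then show ?thesis
    using measurable_sets[OF code_point_measurable assms] sets_funcset by (metis sets.Int)
qed

lemma measure_nu_ball_le:
  assumes w0: "w0 \<in> words" and R: "0 < R"
  shows "measure nu (ball (code_point w0) R)
    \<le> hlen w0 (stop_time lam1 w0 (R / e)) powr s0 * share w0 (stop_time lam2 w0 (R / e))"
proof -
  have "measure nu (ball (code_point w0) R)
      = measure (bernoulli_measure Q) {w \<in> words. code_point w \<in> ball (code_point w0) R}"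
    by (rule measure_nu) simp
  also have "\<dots> \<le> measure (bernoulli_measure Q)
      (approx_cyl w0 (stop_time lam2 w0 (R / e)) (stop_time lam1 w0 (R / e)))"
    using ball_subset_approx_cyl[OF w0] by (intro P.finite_measure_mono sets_approx_cyl) auto
  also have "\<dots> = hlen w0 (stop_time lam1 w0 (R / e)) powr s0 * share w0 (stop_time lam2 w0 (R / e))"
    using stop_time_vert_le_horiz e_pos R by (intro measure_approx_cyl w0) simp
  finally show ?thesis .
qed

lemma measure_nu_ball_ge:
  assumes w0: "w0 \<in> words" and r: "0 < r"
  shows "hlen w0 (stop_time lam1 w0 (r / 3)) powr s0 * share w0 (stop_time lam2 w0 (r / 3))
    \<le> measure nu (ball (code_point w0) r)"
proof -
  define a b where "a = stop_time lam2 w0 (r / 3)" and "b = stop_time lam1 w0 (r / 3)"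
  have ab: "a \<le> b" unfolding a_def b_def using r by (intro stop_time_vert_le_horiz) simp
  have close: "dist (code_point w0) (code_point w) < r" if "w \<in> approx_cyl w0 a b" for w
    using approx_cyl_subset_ball[OF that ab] r
      horiz.prod_stop_time_less[of "r / 3" w0] vert.prod_stop_time_less[of "r / 3" w0]
    unfolding a_def b_def by simp
  have "hlen w0 b powr s0 * share w0 a = measure (bernoulli_measure Q) (approx_cyl w0 a b)"
    by (rule measure_approx_cyl[symmetric, OF w0 ab])
  also have "\<dots> = measure (bernoulli_measure Q) (approx_cyl w0 a b \<inter> words)"
    by (rule measure_bernoulli_measure_restrict[OF sets_approx_cyl, unfolded set_pmf_Q])
  also have "\<dots> \<le> measure (bernoulli_measure Q) {w \<in> words. code_point w \<in> ball (code_point w0) r}"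
    using close by (intro P.finite_measure_mono sets_code_point_preimage) auto
  also have "\<dots> = measure nu (ball (code_point w0) r)"
    by (rule measure_nu[symmetric]) simp
  finally show ?thesis unfolding a_def b_def .
qed

lemma share_pos: "0 < share w n"
  by (rule word_prod_pos) (simp add: column_share_def)

lemma measure_nu_ball_pos:
  assumes "w0 \<in> words" "0 < r"
  shows "0 < measure nu (ball (code_point w0) r)"
proof (rule less_le_trans[OF _ measure_nu_ball_ge[OF assms]])
  have "hlen w0 n \<noteq> 0" for n using horiz.prod_pos[of w0 n] by simp
  then show "0 < hlen w0 (stop_time lam1 w0 (r / 3)) powr s0 * share w0 (stop_time lam2 w0 (r / 3))"
    by (simp add: share_pos)
qed

lemma share_le_scaled:
  assumes "m \<le> n" "vlen w m \<le> K * vlen w n" "0 < K"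
  shows "share w m \<le> K powr s1 * share w n"
proof -
  have "share w m * vlen w n powr s1 \<le> share w n * vlen w m powr s1"
    using assms(1) by (rule share_ratio_le)
  also have "\<dots> \<le> share w n * (K powr s1 * vlen w n powr s1)"
    using assms(2,3) s1_pos vert.prod_pos[of w m] share_pos[of w n]
    by (intro mult_left_mono powr_le_scaled) auto
  finally show ?thesis using vert.prod_pos[of w n] by (simp add: mult_ac)
qed

lemma measure_nu_large_ball: "w0 \<in> words \<Longrightarrow> 3 < r \<Longrightarrow> measure nu (ball (code_point w0) r) = 1"
  using measure_nu_ball_ge[of w0 r]
    prob_space.prob_le_1[OF prob_space_nu, of "ball (code_point w0) r"]
    horiz.stop_time_le[of w0 0 "r / 3"] vert.stop_time_le[of w0 0 "r / 3"]
  by simp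

text \<open>The stopping levels for radii \<open>R\<close> and \<open>r\<close> differ by a factor comparable to \<open>R / r\<close>
  in both directions; the letter part of the measure then changes by at most \<open>(R / r)^s1\<close>.\<close>
lemma measure_nu_ball_doubling:
  assumes w0: "w0 \<in> words" and r: "0 < r" "r < R"
  shows "measure nu (ball (code_point w0) R)
    \<le> (24 / e) powr D * (R / r) powr D * measure nu (ball (code_point w0) r)"
proof (cases "3 < r")
  case True
  have "1 \<le> (24 / e) powr D" "1 \<le> (R / r) powr D"
    using e_pos e_less D_pos r by (auto intro!: ge_one_powr_ge_zero simp: field_simps)
  then have "1 \<le> (24 / e) powr D * (R / r) powr D" using mult_mono[of 1 _ 1] by force
  then show ?thesis using measure_nu_large_ball[OF w0] True r by simp
next
  case False
  define ia ib ja jb where "ia = stop_time lam2 w0 (R / e)" and "ib = stop_time lam1 w0 (R / e)"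
    and "ja = stop_time lam2 w0 (r / 3)" and "jb = stop_time lam1 w0 (r / 3)"
  define K where "K = R / e / (r / 3 * (1 / 8))"
  have K: "0 < K" and K_eq: "K = 24 / e * (R / r)" using e_pos r
    by (simp_all add: K_def field_simps)
  have "e * r \<le> 1 * R" using e_less r by (intro mult_mono) auto
  then have R_e: "0 < R / e" "r / 3 \<le> R / e" using e_pos r by (simp_all add: field_simps)
  have hlen_ratio: "hlen w0 ib \<le> K * hlen w0 jb"
    unfolding ib_def jb_def K_def using R_e r False e_pos lam1_ge
      by (intro horiz.prod_stop_time_ratio) auto
  have "vlen w0 ia \<le> K * vlen w0 ja"
    unfolding ia_def ja_def K_def using R_e r False e_pos lam2_ge
      by (intro vert.prod_stop_time_ratio) auto
  moreover have "ia \<le> ja" unfolding ia_def ja_def using R_e r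
    by (intro vert.stop_time_antimono) auto
  ultimately have share_ratio: "share w0 ia \<le> K powr s1 * share w0 ja"
    using K by (intro share_le_scaled)
  have "measure nu (ball (code_point w0) R) \<le> hlen w0 ib powr s0 * share w0 ia"
    unfolding ia_def ib_def by (rule measure_nu_ball_le[OF w0]) (use r in simp)
  also have "\<dots> \<le> (K powr s0 * hlen w0 jb powr s0) * (K powr s1 * share w0 ja)"
    using hlen_ratio share_ratio K s0_pos horiz.prod_pos[of w0 ib] share_pos[of w0 ia]
    by (intro mult_mono powr_le_scaled) auto
  also have "\<dots> = K powr D * (hlen w0 jb powr s0 * share w0 ja)"
    by (simp add: D_def powr_add mult_ac)
  also have "\<dots> \<le> K powr D * measure nu (ball (code_point w0) r)"
    unfolding ja_def jb_def using measure_nu_ball_ge[OF w0 r(1)] K by simp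
  also have "K powr D = (24 / e) powr D * (R / r) powr D"
    unfolding K_eq using e_pos r by (intro powr_mult)
  finally show ?thesis .
qed

lemma doubling_on_nu: "doubling_on nu (code_point ` words) ((24 / e) powr D) D"
  unfolding doubling_on_def using measure_nu_ball_doubling by blast

text \<open>Along the constant word \<open>ones\<close> the column shares equal \<open>vlen ^ s1\<close> exactly
  (\<open>share_ones\<close>), so the doubling estimate is sharp at its code point.\<close>
definition ones :: "nat \<Rightarrow> nat" where
  "ones = (\<lambda>_. 1)"

lemma ones_in_words: "ones \<in> words"
  by (simp add: ones_def idx_def)

lemma hlen_ones: "hlen ones n = (a1 - e) ^ n"
  by (simp add: ones_def word_prod_def lam1_ex_def)

lemma vlen_ones: "vlen ones n = (1/4 - e) ^ n"
  by (simp add: ones_def word_prod_def lam2_ex_def)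

lemma share_ones: "share ones n = vlen ones n powr s1"
proof -
  have "share ones n = word_prod (\<lambda>i. lam2 i powr s1) ones n"
    by (simp add: ones_def word_prod_def column_share_def lam2_ex_def s1_eq)
  then show ?thesis by (simp add: word_prod_powr less_imp_le[OF vert.weight_pos])
qed

lemma measure_nu_ball_ones_le:
  assumes r: "0 < r"
  shows "measure nu (ball (code_point ones) r) \<le> (r / e) powr D"
proof -
  define a b where "a = stop_time lam2 ones (r / e)" and "b = stop_time lam1 ones (r / e)"
  have "0 < r / e" using r e_pos by simp
  then have "hlen ones b < r / e" "vlen ones a < r / e"
    unfolding a_def b_def by (simp_all add: horiz.prod_stop_time_less vert.prod_stop_time_less)
  have "measure nu (ball (code_point ones) r) \<le> hlen ones b powr s0 * vlen ones a powr s1"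
    unfolding a_def b_def share_ones[symmetric] by (rule measure_nu_ball_le[OF ones_in_words r])
  also have "\<dots> \<le> (r / e) powr s0 * (r / e) powr s1"
    using \<open>hlen ones b < r / e\<close> \<open>vlen ones a < r / e\<close> horiz.prod_pos[of ones b]
      vert.prod_pos[of ones a] s0_pos s1_pos
    by (intro mult_mono powr_mono2) auto
  also have "\<dots> = (r / e) powr D" by (simp add: D_def powr_add)
  finally show ?thesis .
qed

lemma stop_time_ones_ge:
  assumes r: "0 < r" "r \<le> 3"
  shows "(r / 24) powr D
    \<le> hlen ones (stop_time lam1 ones (r / 3)) powr s0 * share ones (stop_time lam2 ones (r / 3))"
proof -
  have "r / 3 * (1/8) \<le> hlen ones (stop_time lam1 ones (r / 3))"
    using r lam1_ge by (intro horiz.prod_stop_time_ge) auto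
  moreover have "r / 3 * (1/8) \<le> vlen ones (stop_time lam2 ones (r / 3))"
    using r lam2_ge by (intro vert.prod_stop_time_ge) auto
  ultimately have "(r / 24) powr s0 * (r / 24) powr s1
      \<le> hlen ones (stop_time lam1 ones (r / 3)) powr s0
         * vlen ones (stop_time lam2 ones (r / 3)) powr s1"
    using r s0_pos s1_pos by (intro mult_mono powr_mono2) auto
  then show ?thesis by (simp add: D_def powr_add share_ones)
qed

lemma measure_nu_ball_ones_ge:
  "0 < r \<Longrightarrow> r \<le> 3 \<Longrightarrow> (r / 24) powr D \<le> measure nu (ball (code_point ones) r)"
  using stop_time_ones_ge measure_nu_ball_ge[OF ones_in_words] by (meson order_trans)

lemma measure_approx_cyl_ones_ge:
  assumes "0 < r" "r \<le> 3"
  shows "(r / 24) powr D \<le> measure (bernoulli_measure Q)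
    (approx_cyl ones (stop_time lam2 ones (r / 3)) (stop_time lam1 ones (r / 3)))"
  using stop_time_ones_ge[OF assms] assms
  by (simp add: measure_approx_cyl[OF ones_in_words] stop_time_vert_le_horiz)

lemma e_le_dist_ones_threes: "e \<le> dist (code_point ones) (code_point (\<lambda>_. 3))"
  using dist_code_point_ge_vlen[of ones "\<lambda>_. 3" 0] by (simp add: ones_def idx_def)

end

section \<open>The Assouad dimensions of the attractor and of the measure\<close>

locale example_attractor = example +
  fixes F :: "(real \<times> real) set"
  assumes F_compact: "compact F" and F_nonempty: "F \<noteq> {}"
    and F_invariant: "F = (\<Union>i\<in>idx. f_ex a1 e i ` F)"
begin

interpretation NU: prob_space nu
  by (rule prob_space_nu)

interpretation P: prob_space "bernoulli_measure Q"
  by (rule prob_space_bernoulli_measure)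

lemma F_eq: "F = code_point ` words"
  using attractor_eq_code_image F_compact F_nonempty F_invariant by (simp add: f_ex_eq)

lemma msupp_nu: "msupp nu = F"
proof
  show "F \<subseteq> msupp nu"
    using measure_nu_ball_pos NU.emeasure_eq_measure
    by (auto simp: F_eq msupp_def)
  show "msupp nu \<subseteq> F"
  proof
    fix x assume x: "x \<in> msupp nu"
    show "x \<in> F"
    proof (rule ccontr)
      assume "x \<notin> F"
      then obtain r where r: "0 < r" "ball x r \<subseteq> - F"
        using compact_imp_closed[OF F_compact] open_contains_ball by (metis Compl_iff open_Compl)
      then have empty: "{w \<in> words. code_point w \<in> ball x r} = {}" using F_eq by auto
      have "measure nu (ball x r)
          = measure (bernoulli_measure Q) {w \<in> words. code_point w \<in> ball x r}"
        by (rule measure_nu) simp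
      also have "\<dots> = 0" unfolding empty by simp
      finally have "emeasure nu (ball x r) = 0" by (simp add: NU.emeasure_eq_measure)
      then show False using x r(1) unfolding msupp_def by auto
    qed
  qed
qed

lemma e_le_diameter: "e \<le> diameter F"
proof -
  have "code_point ones \<in> F" "code_point (\<lambda>_. 3) \<in> F"
    using ones_in_words by (auto simp: F_eq idx_def)
  then have "dist (code_point ones) (code_point (\<lambda>_. 3)) \<le> diameter F"
    by (intro diameter_bounded_bound compact_imp_bounded[OF F_compact])
  then show ?thesis using e_le_dist_ones_threes by linarith
qed

text \<open>At the point coded by \<open>ones\<close>, the measure of a ball of radius \<open>1/q\<close> decays like \<open>q^-D\<close>.\<close>
lemma D_le_of_measure_ratio_bound:
  assumes bound: "\<And>x r R. x \<in> F \<Longrightarrow> 0 < r \<Longrightarrow> r < R \<Longrightarrow> R < diameter F \<Longrightarrow>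
      measure nu (ball x R) / measure nu (ball x r) \<le> C * (R / r) powr s"
  shows "D \<le> s"
proof -
  define R0 where "R0 = e / 2"
  have R0: "0 < R0" "R0 \<le> 3" "R0 < diameter F" using e_pos e_less e_le_diameter
    by (auto simp: R0_def)
  define B where "B = C * R0 powr s * e powr (- D) / (R0 / 24) powr D"
  have "\<exists>q\<ge>M. q powr (D - s) \<le> B" for M
  proof -
    define q where "q = max M (2 / R0)"
    have "2 / R0 \<le> q" "0 < 2 / R0" using R0 by (simp_all add: q_def)
    then have "0 < q" by linarith
    with \<open>2 / R0 \<le> q\<close> have q: "0 < q" "1 / q < R0" using R0 by (simp_all add: field_simps)
    have "(R0 / 24) powr D / (1 / q / e) powr D
        \<le> measure nu (ball (code_point ones) R0) / measure nu (ball (code_point ones) (1 / q))"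
      using measure_nu_ball_ones_ge[OF R0(1,2)] measure_nu_ball_ones_le[of "1 / q"] q
        measure_nu_ball_pos[OF ones_in_words, of "1 / q"]
      by (intro frac_le) auto
    also have "\<dots> \<le> C * (R0 / (1 / q)) powr s"
      using ones_in_words q R0 by (intro bound) (auto simp: F_eq)
    finally have "(R0 / 24) powr D * q powr D * e powr D \<le> C * R0 powr s * q powr s"
      using q R0 e_pos by (simp add: powr_divide powr_mult field_simps)
    then have "q powr (D - s) \<le> B"
      using q R0 e_pos by (simp add: B_def powr_diff powr_minus field_simps)
    moreover have "M \<le> q" by (simp add: q_def)
    ultimately show ?thesis by blast
  qed
  then have "D - s \<le> 0" by (rule exponent_nonpos_if_powr_bounded)
  then show ?thesis by simp
qed

lemma assouad_dim_measure_nu: "assouad_dim_measure nu = D"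
  unfolding assouad_dim_measure_def msupp_nu
proof (rule cInf_eq_minimum)
  have "measure nu (ball x R) / measure nu (ball x r) \<le> (24 / e) powr D * (R / r) powr D"
    if "x \<in> F" "0 < r" "r < R" for x r R
    using that doubling_on_nu measure_nu_ball_pos
    by (auto simp: F_eq doubling_on_def divide_le_eq mult_ac)
  then show "ereal D \<in> ereal ` {s. s \<ge> 0 \<and> (\<exists>C>0. \<forall>x\<in>F. \<forall>r R.
       0 < r \<and> r < R \<and> R < diameter F \<longrightarrow>
       measure nu (ball x R) / measure nu (ball x r) \<le> C * (R / r) powr s)}"
    using D_pos e_pos by (intro imageI CollectI conjI exI[of _ "(24 / e) powr D"]) auto
qed (clarsimp, rule D_le_of_measure_ratio_bound, blast)

lemma cover_num_le:
  assumes "x \<in> F" "0 < r" "r < R"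
  shows "real (cover_num (ball x R \<inter> F) r)
    \<le> (24 / e) powr D * (24 / e) powr D * 8 powr D * (R / r) powr D"
proof (rule cover_num_le_of_doubling[OF _ sets_nu _ _ assms])
  show "finite_measure nu" by (rule NU.finite_measure)
  show "0 < measure nu (ball y \<rho>)" if "y \<in> F" "0 < \<rho>" for y \<rho>
    using that measure_nu_ball_pos by (auto simp: F_eq)
  show "doubling_on nu F ((24 / e) powr D) D" using doubling_on_nu by (simp add: F_eq)
qed

definition right_column_prefix :: "nat \<Rightarrow> (nat \<Rightarrow> nat) set" where
  "right_column_prefix n = {w. \<forall>k\<in>{..<n}. w k \<in> {1, 3}}"

lemma sets_right_column_prefix: "right_column_prefix n \<in> sets (bernoulli_measure Q)"
  unfolding right_column_prefix_def by (rule sets_cylinder) simp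

lemma right_column_prefix_lens:
  assumes "w \<in> right_column_prefix n"
  shows "m \<le> n \<Longrightarrow> vlen w m = (1/4 - e) ^ m" and "share w n = ((1/4 - e) ^ n) powr s1"
proof -
  have w: "w k = 1 \<or> w k = 3" if "k < n" for k using assms that
    by (auto simp: right_column_prefix_def)
  show "vlen w m = (1/4 - e) ^ m" if "m \<le> n"
  proof -
    have "vlen w m = vlen ones m"
    proof (rule word_prod_cong)
      fix k assume "k < m"
      then have "w k = 1 \<or> w k = 3" using w that by simp
      then show "lam2 (w k) = lam2 (ones k)" by (auto simp: ones_def lam2_ex_def)
    qed
    then show ?thesis by (simp add: vlen_ones)
  qed
  have "share w n = share ones n"
  proof (rule word_prod_cong)
    fix k assume "k < n"
    then have "w k = 1 \<or> w k = 3" using w by simp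
    then show "column_share (w k) = column_share (ones k)" by (auto simp: ones_def column_share_def)
  qed
  then show "share w n = ((1/4 - e) ^ n) powr s1" by (simp add: share_ones vlen_ones)
qed

text \<open>Code points of right-column words within distance \<open>e (1/4 - e)^n / 3\<close> of each
  other already agree in their first \<open>n\<close> letters.\<close>
lemma measure_cball_right_column_prefix_le:
  fixes n :: nat and c :: "real \<times> real"
  defines "r \<equiv> e * (1/4 - e) ^ n / 3"
  shows "measure (bernoulli_measure Q)
    ({w \<in> words. code_point w \<in> cball c r} \<inter> right_column_prefix n) \<le> ((1/4 - e) ^ n) powr D"
proof (cases "{w \<in> words. code_point w \<in> cball c r} \<inter> right_column_prefix n = {}")
  case False
  then obtain w1 where w1: "w1 \<in> words" "dist c (code_point w1) \<le> r" "w1 \<in> right_column_prefix n"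
    by auto
  have mu: "0 < 1/4 - e" "1/4 - e < 1" using e_pos e_less by auto
  have r: "0 < r" "3 * r / e = (1/4 - e) ^ n" using mu e_pos by (simp_all add: r_def)
  define a b where "a = stop_time lam2 w1 ((1/4 - e) ^ n)"
    and "b = stop_time lam1 w1 ((1/4 - e) ^ n)"
  have subset: "{w \<in> words. code_point w \<in> cball c r} \<inter> right_column_prefix n \<subseteq> approx_cyl w1 a b"
  proof clarify
    fix w assume w: "w \<in> words" "code_point w \<in> cball c r"
    have "dist (code_point w1) (code_point w) < 3 * r"
      using w(2) w1(2) r(1) dist_triangle[of "code_point w1" "code_point w" c]
      by (simp add: dist_commute)
    then show "w \<in> approx_cyl w1 a b"
      using ball_subset_approx_cyl[OF w1(1) w(1)] unfolding a_def b_def r(2)[symmetric] by blast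
  qed
  have "n \<le> a"
  proof (rule ccontr)
    assume "\<not> n \<le> a"
    then have "(1/4 - e) ^ n \<le> vlen w1 a"
      using right_column_prefix_lens(1)[OF w1(3), of a] mu by (simp add: power_decreasing)
    then show False using vert.prod_stop_time_less[of "(1/4 - e) ^ n" w1] mu unfolding a_def by simp
  qed
  have "measure (bernoulli_measure Q)
      ({w \<in> words. code_point w \<in> cball c r} \<inter> right_column_prefix n)
      \<le> measure (bernoulli_measure Q) (approx_cyl w1 a b)"
    by (intro P.finite_measure_mono subset sets_approx_cyl)
  also have "\<dots> = hlen w1 b powr s0 * share w1 a"
    using \<open>n \<le> a\<close> mu unfolding a_def b_def
    by (intro measure_approx_cyl w1(1) stop_time_vert_le_horiz) simp
  also have "\<dots> \<le> ((1/4 - e) ^ n) powr s0 * ((1/4 - e) ^ n) powr s1"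
  proof (intro mult_mono)
    show "hlen w1 b powr s0 \<le> ((1/4 - e) ^ n) powr s0"
      using horiz.prod_stop_time_less[of "(1/4 - e) ^ n" w1] horiz.prod_pos[of w1 b] mu s0_pos
      unfolding b_def by (intro powr_mono2) auto
    show "share w1 a \<le> ((1/4 - e) ^ n) powr s1"
      using word_prod_antimono[OF _ _ \<open>n \<le> a\<close>, of column_share w1]
        right_column_prefix_lens(2)[OF w1(3)] by (simp add: column_share_def)
  qed (use share_pos in \<open>auto intro: less_imp_le\<close>)
  also have "\<dots> = ((1/4 - e) ^ n) powr D" by (simp add: D_def powr_add)
  finally show ?thesis .
qed simp

lemma approx_cyl_ones_subset_right_column_prefix:
  "n \<le> b \<Longrightarrow> approx_cyl ones a b \<subseteq> right_column_prefix n"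
  by (auto simp: approx_cyl_def column_class_def ones_def column_def idx_def right_column_prefix_def
      split: if_splits)

text \<open>The approximate cylinder around \<open>ones\<close> for radius \<open>3 (a1 - e)^n\<close> has measure about
  \<open>(a1 - e)^(n D)\<close>, while each ball of radius \<open>e (1/4 - e)^n / 3\<close> captures at most
  \<open>(1/4 - e)^(n D)\<close> of it.\<close>
lemma cover_num_ge:
  fixes n :: nat
  defines "R \<equiv> 3 * (a1 - e) ^ n" and "r \<equiv> e * (1/4 - e) ^ n / 3"
  shows "(((a1 - e) / (1/4 - e)) ^ n / 8) powr D
    \<le> real (cover_num (ball (code_point ones) R \<inter> F) r)"
proof -
  have lA: "0 < a1 - e" "a1 - e < 1" and mu: "0 < 1/4 - e" using e_pos e_less a1_gt a1_less by auto
  have R: "0 < R" "R \<le> 3" using lA by (auto simp: R_def power_le_one)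
  have r: "0 < r" using mu e_pos by (simp add: r_def)
  obtain C where C: "finite C" "card C = cover_num (ball (code_point ones) R \<inter> F) r"
    "ball (code_point ones) R \<inter> F \<subseteq> (\<Union>c\<in>C. cball c r)"
    by (rule optimal_cover_exists[OF F_compact Int_lower2 r])
  define a b where "a = stop_time lam2 ones (R / 3)" and "b = stop_time lam1 ones (R / 3)"
  have ab: "a \<le> b" using R unfolding a_def b_def by (intro stop_time_vert_le_horiz) simp
  have "(a1 - e) ^ b < (a1 - e) ^ n"
    using horiz.prod_stop_time_less[of "R / 3" ones] R by (simp add: b_def hlen_ones R_def)
  then have "n \<le> b" using lA by (simp add: power_strict_decreasing_iff)
  define B where "B c = {w \<in> words. code_point w \<in> cball c r} \<inter> right_column_prefix n" for c
  have sets_B: "B c \<in> sets (bernoulli_measure Q)" for c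
    unfolding B_def by (intro sets.Int sets_code_point_preimage sets_right_column_prefix) simp
  have covered: "approx_cyl ones a b \<inter> words \<subseteq> (\<Union>c\<in>C. B c)"
  proof
    fix w assume w: "w \<in> approx_cyl ones a b \<inter> words"
    then have "dist (code_point ones) (code_point w) \<le> hlen ones b + vlen ones a"
      using approx_cyl_subset_ball[OF _ ab] by blast
    then have "dist (code_point ones) (code_point w) < R"
      using horiz.prod_stop_time_less[of "R / 3" ones] vert.prod_stop_time_less[of "R / 3" ones] R
      unfolding a_def b_def by simp
    then obtain c where "c \<in> C" "code_point w \<in> cball c r" using w C(3) by (auto simp: F_eq)
    then show "w \<in> (\<Union>c\<in>C. B c)"
      using w approx_cyl_ones_subset_right_column_prefix[OF \<open>n \<le> b\<close>] by (auto simp: B_def)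
  qed
  have "(R / 24) powr D \<le> measure (bernoulli_measure Q) (approx_cyl ones a b)"
    unfolding a_def b_def by (rule measure_approx_cyl_ones_ge[OF R])
  also have "\<dots> = measure (bernoulli_measure Q) (approx_cyl ones a b \<inter> words)"
    by (rule measure_bernoulli_measure_restrict[OF sets_approx_cyl, unfolded set_pmf_Q])
  also have "\<dots> \<le> measure (bernoulli_measure Q) (\<Union>c\<in>C. B c)"
    using C(1) sets_B by (intro P.finite_measure_mono[OF covered]) auto
  also have "\<dots> \<le> (\<Sum>c\<in>C. measure (bernoulli_measure Q) (B c))"
    using C(1) sets_B by (intro P.finite_measure_subadditive_finite) auto
  also have "\<dots> \<le> (\<Sum>c\<in>C. ((1/4 - e) ^ n) powr D)"
    unfolding B_def r_def by (intro sum_mono measure_cball_right_column_prefix_le)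
  also have "(R / 24) powr D = (((a1 - e) / (1/4 - e)) ^ n / 8) powr D * ((1/4 - e) ^ n) powr D"
    using lA mu by (simp add: R_def power_divide powr_mult[symmetric])
  finally show ?thesis using C(2) mu by simp
qed

lemma D_le_of_cover_bound:
  assumes bound: "\<And>x r R. x \<in> F \<Longrightarrow> 0 < r \<Longrightarrow> r < R \<Longrightarrow>
      real (cover_num (ball x R \<inter> F) r) \<le> C * (R / r) powr s"
  shows "D \<le> s"
proof -
  have lA: "0 < a1 - e" and mu: "0 < 1/4 - e" "1/4 - e < a1 - e"
    using e_pos e_less a1_gt a1_less by auto
  define B where "B = 8 powr D * C * (9 / e) powr s"
  have "\<exists>q\<ge>M. q powr (D - s) \<le> B" for M
  proof -
    obtain n where n: "M < ((a1 - e) / (1/4 - e)) ^ n"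
      using real_arch_pow[of "(a1 - e) / (1/4 - e)" M] mu by auto
    define q R r where "q = ((a1 - e) / (1/4 - e)) ^ n"
      and "R = 3 * (a1 - e) ^ n" and "r = e * (1/4 - e) ^ n / 3"
    have "0 < q" "(a1 - e) ^ n = q * (1/4 - e) ^ n" using lA mu
      by (simp_all add: q_def power_divide)
    then have q: "0 < q" "R / r = 9 / e * q" using mu e_pos
      by (simp_all add: R_def r_def field_simps)
    have "(1/4 - e) ^ n \<le> (a1 - e) ^ n" "e * (1/4 - e) ^ n < (1/4 - e) ^ n"
      using mu e_less by (simp_all add: power_mono)
    then have "r < R" using zero_less_power[OF lA, of n] unfolding r_def R_def by linarith
    have "(q / 8) powr D \<le> real (cover_num (ball (code_point ones) R \<inter> F) r)"
      unfolding q_def R_def r_def by (rule cover_num_ge)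
    also have "\<dots> \<le> C * (R / r) powr s"
      using ones_in_words \<open>r < R\<close> e_pos mu by (intro bound) (auto simp: F_eq r_def)
    also note q(2)
    finally have "q powr (D - s) \<le> B"
      using q e_pos by (simp add: B_def powr_divide powr_mult powr_diff field_simps)
    moreover have "M \<le> q" using n by (simp add: q_def)
    ultimately show ?thesis by blast
  qed
  then have "D - s \<le> 0" by (rule exponent_nonpos_if_powr_bounded)
  then show ?thesis by simp
qed

lemma assouad_dim_set_F: "assouad_dim_set F = D"
  unfolding assouad_dim_set_def
proof (rule cInf_eq_minimum)
  show "ereal D \<in> ereal ` {s. s \<ge> 0 \<and> (\<exists>C>0. \<forall>x\<in>F. \<forall>r R. 0 < r \<and> r < R \<longrightarrow>
       real (cover_num (ball x R \<inter> F) r) \<le> C * (R / r) powr s)}"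
    using D_pos e_pos cover_num_le
    by (intro imageI CollectI conjI exI[of _ "(24 / e) powr D * (24 / e) powr D * 8 powr D"]) auto
qed (clarsimp, rule D_le_of_cover_bound, blast)

end

theorem proposition4p2:
  shows "\<exists>e0>0. \<forall>e. 0 < e \<and> e < e0 \<longrightarrow>
    (\<exists>a b. a < b \<and> {a<..<b} \<subseteq> {e<..<1} \<and>
      (\<forall>a1\<in>{a<..<b}. \<forall>F :: (real \<times> real) set.
          compact F \<and> F \<noteq> {} \<and> F = (\<Union>i\<in>idx. f_ex a1 e i ` F) \<longrightarrow>
          assouad_dim_set F = assouad_dim_measure (bernoulli_proj (f_ex a1 e) (q_ex a1 e))))"
proof (rule exI[of _ "1/8"], intro conjI allI impI)
  fix e :: real assume e: "0 < e \<and> e < 1/8"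
  have "assouad_dim_set F = assouad_dim_measure (bernoulli_proj (f_ex a1 e) (q_ex a1 e))"
    if "a1 \<in> {1/3<..<1/2}" "compact F" "F \<noteq> {}" "F = (\<Union>i\<in>idx. f_ex a1 e i ` F)" for a1 F
  proof -
    interpret example_attractor a1 e F
      using e that by unfold_locales auto
    show ?thesis by (simp add: bernoulli_proj_eq assouad_dim_set_F assouad_dim_measure_nu)
  qed
  moreover have "{1/3<..<1/2} \<subseteq> {e<..<1::real}" using e by auto
  ultimately show "\<exists>a b. a < b \<and> {a<..<b} \<subseteq> {e<..<1} \<and>
      (\<forall>a1\<in>{a<..<b}. \<forall>F :: (real \<times> real) set.
          compact F \<and> F \<noteq> {} \<and> F = (\<Union>i\<in>idx. f_ex a1 e i ` F) \<longrightarrow>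
          assouad_dim_set F = assouad_dim_measure (bernoulli_proj (f_ex a1 e) (q_ex a1 e)))"
    by (intro exI[of _ "1/3"] exI[of _ "1/2"]) auto
qed simp

end
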